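(* Fix $i\in\{1,2,3\}$. Suppose (i) $Q_{k,i}\to Q_{\infty,i}$ as $k\to\infty$ with $Q_{\infty,i}=\mathrm{diag}(Q_{\infty,i}^{11},Q_{\infty,i}^{22})$; (ii) the dual of the terminal payoff $\widehat\Psi^i(z)\doteq-\sup_{x\in\mathbb{R}^n}\{\psi^i(x,z)-\Psi(x)\}$ is continuous; and (iii) there exist $r_0>0,\varepsilon_0>0$ with $\widehat\Psi^i(z)\le-\tfrac12z^T(Q_{\infty,i}^{22}+\varepsilon_0I)z$ for all $|z|>r_0$. Then for every $x\in\mathbb{R}^n$, $W_k(x)\to W_\infty(x)\doteq\tfrac12x^TQ_{\infty,i}^{11}x+\kappa$, where $\kappa\doteq\sup_{z\in\mathbb{R}^n}\{\widehat\Psi^i(z)+\tfrac12z^TQ_{\infty,i}^{22}z\}$.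
   Context: Consider $x_{k+1}=Ax_k+Bw_k$, $x_0=x\in\mathbb{R}^n$, and the value function $W_K(x)=\sup_{w}\big[\sum_{k=0}^{K-1}(\tfrac12x_k^T\Phi x_k-\tfrac{\gamma^2}{2}|w_k|^2)+\Psi(x_K)\big]$ with $\Phi=\Phi^T>0$ and terminal payoff $\Psi$ (possibly non-quadratic, bounded above by $\tfrac r2|x|^2+c$). Let $\mathcal{S}_k$ be the $k$-step dynamic programming operator, so $W_k=\mathcal{S}_k\Psi$. Basis functions: $\psi^1(x,z)=z^Tx$, $\psi^2(x,z)=-\tfrac12(x-z)^TM(x-z)$ ($M=M^T>0$), $\psi^3(x,z)=\delta(x-z)$ ($\delta(0)=0$, $-\infty$ otherwise). Define $\mathrm{S}_{k,i}(x,z)=(\mathcal{S}_k\psi^i(\cdot,z))(x)=\tfrac12[x;z]^TQ_{k,i}[x;z]$, with $Q_{k,i}$ symmetric with $n\times n$ blocks $Q_{k,i}^{jl}$. Then $W_k(x)=\sup_{z}\{\mathrm{S}_{k,i}(x,z)+\widehat\Psi^i(z)\}$. *)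

theory Defs
  imports "HOL-Analysis.Analysis"
begin

fun traj :: "real^'n^'n \<Rightarrow> real^'m^'n \<Rightarrow> real^'n \<Rightarrow> (nat \<Rightarrow> real^'m) \<Rightarrow> nat \<Rightarrow> real^'n" where
  "traj A B x w 0 = x"
| "traj A B x w (Suc k) = A *v traj A B x w k + B *v w k"

definition running_cost :: "real^'n^'n \<Rightarrow> real \<Rightarrow> real^'n \<Rightarrow> real^'m \<Rightarrow> real" where
  "running_cost Phi gamma x w = (1/2) * (x \<bullet> (Phi *v x)) - (gamma^2/2) * (norm w)^2"

definition DP_op :: "real^'n^'n \<Rightarrow> real^'m^'n \<Rightarrow> real^'n^'n \<Rightarrow> real \<Rightarrow> nat
    \<Rightarrow> (real^'n \<Rightarrow> ereal) \<Rightarrow> real^'n \<Rightarrow> ereal" where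
  "DP_op A B Phi gamma K phi x =
     (SUP w. ereal (\<Sum>k<K. running_cost Phi gamma (traj A B x w k) (w k)) + phi (traj A B x w K))"

definition value_fn :: "real^'n^'n \<Rightarrow> real^'m^'n \<Rightarrow> real^'n^'n \<Rightarrow> real \<Rightarrow> (real^'n \<Rightarrow> real)
    \<Rightarrow> nat \<Rightarrow> real^'n \<Rightarrow> ereal" where
  "value_fn A B Phi gamma Psi K x = DP_op A B Phi gamma K (\<lambda>y. ereal (Psi y)) x"

definition psi_basis :: "real^'n^'n \<Rightarrow> nat \<Rightarrow> real^'n \<Rightarrow> real^'n \<Rightarrow> ereal" where
  "psi_basis M i x z =
     (if i = 1 then ereal (z \<bullet> x)
      else if i = 2 then ereal (- (1/2) * ((x - z) \<bullet> (M *v (x - z))))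
      else (if x = z then 0 else -\<infinity>))"

definition dual_payoff :: "real^'n^'n \<Rightarrow> nat \<Rightarrow> (real^'n \<Rightarrow> real) \<Rightarrow> real^'n \<Rightarrow> ereal" where
  "dual_payoff M i Psi z = - (SUP x. psi_basis M i x z - ereal (Psi x))"

text \<open>(1/2)[x;z]^T Q [x;z] for Q given by its n x n blocks Q^11, Q^12, Q^21, Q^22.\<close>
definition block_quad :: "real^'n^'n \<Rightarrow> real^'n^'n \<Rightarrow> real^'n^'n \<Rightarrow> real^'n^'n
    \<Rightarrow> real^'n \<Rightarrow> real^'n \<Rightarrow> real" where
  "block_quad Q11 Q12 Q21 Q22 x z =
     (1/2) * (x \<bullet> (Q11 *v x) + x \<bullet> (Q12 *v z) + z \<bullet> (Q21 *v x) + z \<bullet> (Q22 *v z))"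

end

theory Submission
  imports Defs
begin

text \<open>For fixed x, W_k(x) is the supremum over z of f_k(z) = S_k(x,z) + hat Psi(z). Since the blocks
  converge and the off-diagonal limits vanish, f_k differs from
  g(z) = 1/2 x'Q11inf x + 1/2 z'Q22inf z + hat Psi(z) by at most a_k + b_k|z| + d_k|z|^2 with
  coefficients tending to 0. Pointwise convergence already gives the lower bound for the supremum.
  For the upper bound, continuity and the growth condition give g(z) <= B - (eps0/2)|z|^2; once d_k
  is below half of that rate, f_k stays below sup g far from the origin, and on the remaining ball
  the convergence is uniform.\<close>

lemma norm_matrix_vector_mult_le:
  fixes A :: "real^'n^'m"
  shows "norm (A *v x) \<le> norm A * norm x"
proof -
  have "norm (A *v x) = L2_set (\<lambda>i. \<bar>A $ i \<bullet> x\<bar>) UNIV"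
    by (simp add: norm_vec_def matrix_mult_dot)
  also have "\<dots> \<le> L2_set (\<lambda>i. norm (A $ i) * norm x) UNIV"
    by (rule L2_set_mono) (auto simp: Cauchy_Schwarz_ineq2)
  also have "\<dots> = norm A * norm x"
    by (simp add: L2_set_left_distrib norm_vec_def)
  finally show ?thesis .
qed

lemma abs_inner_matrix_vector_mult_le:
  fixes A :: "real^'n^'m"
  shows "\<bar>y \<bullet> (A *v x)\<bar> \<le> norm A * norm y * norm x"
proof -
  have "\<bar>y \<bullet> (A *v x)\<bar> \<le> norm y * norm (A *v x)"
    by (rule Cauchy_Schwarz_ineq2)
  also have "\<dots> \<le> norm y * (norm A * norm x)"
    by (rule mult_left_mono[OF norm_matrix_vector_mult_le]) simp
  finally show ?thesis
    by (simp add: algebra_simps)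
qed

lemma block_quad_diff:
  "block_quad P11 P12 P21 P22 x z - block_quad R11 R12 R21 R22 x z
     = block_quad (P11 - R11) (P12 - R12) (P21 - R21) (P22 - R22) x z"
  by (simp add: block_quad_def algebra_simps)

lemma block_quad_diag:
  "block_quad Q11 0 0 Q22 x z = (1/2) * (x \<bullet> (Q11 *v x)) + (1/2) * (z \<bullet> (Q22 *v z))"
  by (simp add: block_quad_def algebra_simps)

lemma abs_block_quad_le:
  "\<bar>block_quad Q11 Q12 Q21 Q22 x z\<bar>
     \<le> (1/2) * (norm Q11 * (norm x)^2 + (norm Q12 + norm Q21) * norm x * norm z
                + norm Q22 * (norm z)^2)"
proof -
  have "\<bar>x \<bullet> (Q11 *v x) + x \<bullet> (Q12 *v z) + z \<bullet> (Q21 *v x) + z \<bullet> (Q22 *v z)\<bar>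
      \<le> norm Q11 * norm x * norm x + norm Q12 * norm x * norm z
         + norm Q21 * norm z * norm x + norm Q22 * norm z * norm z"
    using abs_inner_matrix_vector_mult_le[of x Q11 x] abs_inner_matrix_vector_mult_le[of x Q12 z]
      abs_inner_matrix_vector_mult_le[of z Q21 x] abs_inner_matrix_vector_mult_le[of z Q22 z]
    by linarith
  then show ?thesis
    by (simp add: block_quad_def abs_mult power2_eq_square algebra_simps)
qed

lemma continuous_bounded_by_quadratic_decay:
  fixes g :: "'a::{heine_borel,real_normed_vector} \<Rightarrow> real"
  assumes cont: "continuous_on UNIV g" and "c \<ge> 0"
    and decay: "\<And>z. r < norm z \<Longrightarrow> g z \<le> b - c * (norm z)^2"
  obtains B where "\<And>z. g z \<le> B - c * (norm z)^2"
proof -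
  obtain M where M: "\<And>z. z \<in> cball 0 r \<Longrightarrow> g z \<le> M"
    using compact_imp_bounded[OF compact_continuous_image[OF continuous_on_subset[OF cont]]]
    by (metis abs_le_D1 bounded_real compact_cball image_eqI subset_UNIV)
  have "g z \<le> max (M + c * r^2) b - c * (norm z)^2" for z
  proof (cases "r < norm z")
    case False
    then have "c * (norm z)^2 \<le> c * r^2"
      using \<open>c \<ge> 0\<close> by (intro mult_left_mono power_mono) auto
    with M[of z] False show ?thesis
      by (simp add: dist_norm)
  qed (use decay in fastforce)
  then show ?thesis
    using that by blast
qed

lemma SUP_ereal_of_bdd_above:
  fixes g :: "'a \<Rightarrow> real"
  assumes "bdd_above (range g)"
  shows "(SUP z. ereal (g z)) = ereal (SUP z. g z)"
proof -
  have "ereal (g undefined) \<le> (SUP z. ereal (g z))"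
    by (rule SUP_upper) simp
  moreover have "(SUP z. ereal (g z)) \<le> ereal (SUP z. g z)"
    using assms by (intro SUP_least) (simp add: cSUP_upper)
  ultimately have "\<bar>SUP z. ereal (g z)\<bar> \<noteq> \<infinity>"
    by auto
  then show ?thesis
    by (rule ereal_SUP[symmetric])
qed

lemma eventually_less_SUP_of_tendsto:
  fixes f :: "'i \<Rightarrow> 'a \<Rightarrow> real"
  assumes lim: "\<And>z. ((\<lambda>k. f k z) \<longlongrightarrow> g z) F" and less: "a < (SUP z. ereal (g z))"
  shows "eventually (\<lambda>k. a < (SUP z. ereal (f k z))) F"
proof -
  obtain z where "a < ereal (g z)"
    using less by (auto simp: less_SUP_iff)
  moreover have "((\<lambda>k. ereal (f k z)) \<longlongrightarrow> ereal (g z)) F"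
    using lim by (rule tendsto_ereal)
  ultimately have "eventually (\<lambda>k. a < ereal (f k z)) F"
    by (rule order_tendstoD(1)[rotated])
  then show ?thesis
    by eventually_elim (meson SUP_upper UNIV_I order_less_le_trans)
qed

lemma quadratic_dominates_affine:
  fixes c D :: real
  assumes "c > 0"
  obtains R where "1 \<le> R" and "\<And>t. R \<le> t \<Longrightarrow> t + D \<le> c * t^2"
proof
  define R where "R = max 1 ((1 + \<bar>D\<bar>) / c)"
  show "1 \<le> R"
    by (simp add: R_def)
  fix t assume "R \<le> t"
  then have "(1 + \<bar>D\<bar>) / c \<le> t" and "1 \<le> t"
    by (auto simp: R_def)
  then have "1 + \<bar>D\<bar> \<le> c * t"
    using \<open>c > 0\<close> by (simp add: field_simps)
  have "t + D \<le> (1 + \<bar>D\<bar>) * t"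
    using mult_left_mono[OF \<open>1 \<le> t\<close>, of "\<bar>D\<bar>"] by (simp add: algebra_simps)
  also have "\<dots> \<le> c * t * t"
    using \<open>1 + \<bar>D\<bar> \<le> c * t\<close> \<open>1 \<le> t\<close> by (intro mult_right_mono) auto
  finally show "t + D \<le> c * t^2"
    by (simp add: power2_eq_square mult.assoc)
qed

lemma eventually_uniform_upper_bound:
  fixes g :: "'a::real_normed_vector \<Rightarrow> real" and f :: "nat \<Rightarrow> 'a \<Rightarrow> real"
  assumes "c > 0" and decay: "\<And>z. g z \<le> B - c * (norm z)^2" and K: "\<And>z. g z \<le> K"
    and err: "\<And>k z. f k z \<le> g z + a k + b k * norm z + d k * (norm z)^2"
    and lim: "a \<longlonglongrightarrow> 0" "b \<longlonglongrightarrow> 0" "d \<longlonglongrightarrow> 0" and "\<eta> > 0"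
  shows "eventually (\<lambda>k. \<forall>z. f k z \<le> K + \<eta>) sequentially"
proof -
  obtain R where "1 \<le> R" and far: "\<And>t. R \<le> t \<Longrightarrow> t + (B - K) \<le> (c/2) * t^2"
    by (rule quadratic_dominates_affine[of "c/2" "B - K"]) (use \<open>c > 0\<close> in auto)
  have "(\<lambda>k. \<bar>a k\<bar> + \<bar>b k\<bar> * R + \<bar>d k\<bar> * R^2) \<longlonglongrightarrow> 0"
    using tendsto_add[OF tendsto_add[OF tendsto_rabs_zero[OF lim(1)]
        tendsto_mult_left_zero[OF tendsto_rabs_zero[OF lim(2)]]]
        tendsto_mult_left_zero[OF tendsto_rabs_zero[OF lim(3)]]]
    by simp
  then have "eventually (\<lambda>k. \<bar>a k\<bar> + \<bar>b k\<bar> * R + \<bar>d k\<bar> * R^2 < \<eta>) sequentially"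
    using \<open>\<eta> > 0\<close> by (rule order_tendstoD(2))
  moreover have "eventually (\<lambda>k. \<bar>b k\<bar> < 1) sequentially"
    using tendsto_rabs_zero[OF lim(2)] by (rule order_tendstoD(2)) simp
  moreover have "eventually (\<lambda>k. d k < c/2) sequentially"
    using lim(3) by (rule order_tendstoD(2)) (use \<open>c > 0\<close> in simp)
  ultimately show ?thesis
  proof eventually_elim
    case (elim k)
    show ?case
    proof
      fix z
      show "f k z \<le> K + \<eta>"
      proof (cases "norm z \<le> R")
        case True
        have "a k + b k * norm z + d k * (norm z)^2 \<le> \<bar>a k\<bar> + \<bar>b k\<bar> * R + \<bar>d k\<bar> * R^2"
          using True by (intro add_mono abs_ge_self mult_mono power_mono abs_ge_self) auto
        with err[of k z] K[of z] elim(1) show ?thesis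
          by linarith
      next
        case False
        have "b k * norm z \<le> \<bar>b k\<bar> * norm z"
          by (simp add: mult_right_mono)
        also have "\<dots> \<le> norm z"
          using elim(2) by (simp add: mult_left_le_one_le)
        finally have "b k * norm z \<le> norm z" .
        moreover have "d k * (norm z)^2 \<le> (c/2) * (norm z)^2"
          using elim(3) by (intro mult_right_mono) auto
        moreover have "a k < \<eta>"
          using elim(1) abs_ge_self[of "a k"] \<open>1 \<le> R\<close>
          by (smt (verit) mult_nonneg_nonneg zero_le_power2 abs_ge_zero)
        ultimately show ?thesis
          using err[of k z] decay[of z] far[of "norm z"] False by linarith
      qed
    qed
  qed
qed

lemma tendsto_SUP_quadratic_perturbation:
  fixes g :: "'a::real_normed_vector \<Rightarrow> real" and f :: "nat \<Rightarrow> 'a \<Rightarrow> real"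
  assumes "c > 0" and decay: "\<And>z. g z \<le> B - c * (norm z)^2"
    and err: "\<And>k z. \<bar>f k z - g z\<bar> \<le> a k + b k * norm z + d k * (norm z)^2"
    and lim: "a \<longlonglongrightarrow> 0" "b \<longlonglongrightarrow> 0" "d \<longlonglongrightarrow> 0"
  shows "(\<lambda>k. SUP z. ereal (f k z)) \<longlonglongrightarrow> (SUP z. ereal (g z))"
proof -
  have "g z \<le> B" for z
    using decay[of z] \<open>c > 0\<close> by (smt (verit) mult_nonneg_nonneg zero_le_power2)
  then have bdd: "bdd_above (range g)"
    by (intro bdd_aboveI2)
  define K where "K = (SUP z. g z)"
  have gK: "g z \<le> K" for z
    unfolding K_def using bdd by (intro cSUP_upper) simp_all
  have K: "(SUP z. ereal (g z)) = ereal K"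
    unfolding K_def using bdd by (rule SUP_ereal_of_bdd_above)
  have pointwise: "(\<lambda>k. f k z) \<longlonglongrightarrow> g z" for z
  proof -
    have "(\<lambda>k. a k + b k * norm z + d k * (norm z)^2) \<longlonglongrightarrow> 0"
      using tendsto_add[OF tendsto_add[OF lim(1) tendsto_mult_left_zero[OF lim(2)]]
          tendsto_mult_left_zero[OF lim(3)]]
      by simp
    moreover have "eventually (\<lambda>k. norm (f k z - g z) \<le> a k + b k * norm z + d k * (norm z)^2) sequentially"
      using err by (simp add: always_eventually)
    ultimately have "(\<lambda>k. f k z - g z) \<longlonglongrightarrow> 0"
      by (rule Lim_null_comparison[rotated])
    then show ?thesis
      by (rule LIM_zero_cancel)
  qed
  show ?thesis
  proof (rule order_tendstoI)
    fix y assume "y < (SUP z. ereal (g z))"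
    then show "eventually (\<lambda>k. y < (SUP z. ereal (f k z))) sequentially"
      using pointwise by (intro eventually_less_SUP_of_tendsto)
  next
    fix y assume "(SUP z. ereal (g z)) < y"
    then have "ereal K < y"
      unfolding K .
    obtain r where "K < r" and less: "ereal r < y"
      using ereal_dense2[OF \<open>ereal K < y\<close>] by auto
    have "f k z \<le> g z + a k + b k * norm z + d k * (norm z)^2" for k z
      using err[of k z] by linarith
    moreover have "r - K > 0"
      using \<open>K < r\<close> by simp
    ultimately have "eventually (\<lambda>k. \<forall>z. f k z \<le> K + (r - K)) sequentially"
      by (rule eventually_uniform_upper_bound[OF \<open>c > 0\<close> decay gK _ lim])
    then show "eventually (\<lambda>k. (SUP z. ereal (f k z)) < y) sequentially"
    proof eventually_elim
      case (elim k)
      then have "(SUP z. ereal (f k z)) \<le> ereal r"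
        by (intro SUP_least) simp
      then show ?case
        using less by (rule le_less_trans)
    qed
  qed
qed

lemma tendsto_SUP_block_quad_plus:
  fixes h :: "real^'n \<Rightarrow> real" and Q11 Q12 Q21 Q22 :: "nat \<Rightarrow> real^'n^'n"
  assumes lim11: "Q11 \<longlonglongrightarrow> Q11inf" and lim12: "Q12 \<longlonglongrightarrow> 0"
    and lim21: "Q21 \<longlonglongrightarrow> 0" and lim22: "Q22 \<longlonglongrightarrow> Q22inf"
    and "c > 0" and decay: "\<And>z. block_quad Q11inf 0 0 Q22inf x z + h z \<le> B - c * (norm z)^2"
  shows "(\<lambda>k. SUP z. ereal (block_quad (Q11 k) (Q12 k) (Q21 k) (Q22 k) x z + h z))
           \<longlonglongrightarrow> (SUP z. ereal (block_quad Q11inf 0 0 Q22inf x z + h z))"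
proof (rule tendsto_SUP_quadratic_perturbation[OF \<open>c > 0\<close> decay])
  fix k z
  have "block_quad (Q11 k) (Q12 k) (Q21 k) (Q22 k) x z + h z - (block_quad Q11inf 0 0 Q22inf x z + h z)
      = block_quad (Q11 k - Q11inf) (Q12 k - 0) (Q21 k - 0) (Q22 k - Q22inf) x z"
    by (simp only: block_quad_diff[symmetric])
  then show "\<bar>block_quad (Q11 k) (Q12 k) (Q21 k) (Q22 k) x z + h z
        - (block_quad Q11inf 0 0 Q22inf x z + h z)\<bar>
      \<le> (1/2) * (norm (Q11 k - Q11inf) * (norm x)^2)
        + (1/2) * ((norm (Q12 k) + norm (Q21 k)) * norm x) * norm z
        + (1/2) * norm (Q22 k - Q22inf) * (norm z)^2"
    using abs_block_quad_le[of "Q11 k - Q11inf" "Q12 k" "Q21 k" "Q22 k - Q22inf" x z]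
    by (simp add: algebra_simps)
next
  show "(\<lambda>k. (1/2) * (norm (Q11 k - Q11inf) * (norm x)^2)) \<longlonglongrightarrow> 0"
    using tendsto_norm_zero[OF LIM_zero[OF lim11]]
    by (intro tendsto_mult_right_zero tendsto_mult_left_zero)
  show "(\<lambda>k. (1/2) * ((norm (Q12 k) + norm (Q21 k)) * norm x)) \<longlonglongrightarrow> 0"
    using tendsto_add_zero[OF tendsto_norm_zero[OF lim12] tendsto_norm_zero[OF lim21]]
    by (intro tendsto_mult_right_zero tendsto_mult_left_zero)
  show "(\<lambda>k. (1/2) * norm (Q22 k - Q22inf)) \<longlonglongrightarrow> 0"
    using tendsto_norm_zero[OF LIM_zero[OF lim22]] by (intro tendsto_mult_right_zero)
qed

lemma matrix_vector_mult_add_scaleR_mat_1: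
  fixes Q :: "real^'n^'n"
  shows "(Q + c *\<^sub>R mat 1) *v z = Q *v z + c *\<^sub>R z"
  by (simp add: matrix_vector_mult_add_rdistrib flip: scaleR_matrix_vector_assoc)

theorem theorem4p5:
  fixes A :: "real^'n^'n" and B :: "real^'m^'n" and Phi M :: "real^'n^'n"
    and gamma :: real and Psi :: "real^'n \<Rightarrow> real" and i :: nat
    and Q11 Q12 Q21 Q22 :: "nat \<Rightarrow> real^'n^'n" and Q11inf Q22inf :: "real^'n^'n"
  assumes i_range: "i \<in> {1, 2, 3}"
    and Phi_sym: "transpose Phi = Phi"
    and Phi_pos: "\<forall>x. x \<noteq> 0 \<longrightarrow> x \<bullet> (Phi *v x) > 0"
    and M_sym: "transpose M = M"
    and M_pos: "\<forall>x. x \<noteq> 0 \<longrightarrow> x \<bullet> (M *v x) > 0"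
    and Psi_bound: "\<exists>r c. \<forall>x. Psi x \<le> r / 2 * (norm x)^2 + c"
    and Q_sym: "\<forall>k. transpose (Q11 k) = Q11 k \<and> transpose (Q22 k) = Q22 k
                    \<and> Q21 k = transpose (Q12 k)"
    and S_quad: "\<exists>k0. \<forall>k\<ge>k0. \<forall>x z.
        DP_op A B Phi gamma k (\<lambda>y. psi_basis M i y z) x
          = ereal (block_quad (Q11 k) (Q12 k) (Q21 k) (Q22 k) x z)"
    and W_repr: "\<forall>k x. value_fn A B Phi gamma Psi k x
        = (SUP z. DP_op A B Phi gamma k (\<lambda>y. psi_basis M i y z) x + dual_payoff M i Psi z)"
    and lim11: "Q11 \<longlonglongrightarrow> Q11inf"
    and lim12: "Q12 \<longlonglongrightarrow> 0"
    and lim21: "Q21 \<longlonglongrightarrow> 0"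
    and lim22: "Q22 \<longlonglongrightarrow> Q22inf"
    and dual_finite: "\<forall>z. \<bar>dual_payoff M i Psi z\<bar> \<noteq> \<infinity>"
    and dual_cont: "continuous_on UNIV (\<lambda>z. real_of_ereal (dual_payoff M i Psi z))"
    and growth: "\<exists>r0 > 0. \<exists>eps0 > 0. \<forall>z. norm z > r0 \<longrightarrow>
        dual_payoff M i Psi z \<le> ereal (- (1/2) * (z \<bullet> ((Q22inf + eps0 *\<^sub>R mat 1) *v z)))"
  shows "\<forall>x. (\<lambda>k. value_fn A B Phi gamma Psi k x) \<longlonglongrightarrow>
           ereal ((1/2) * (x \<bullet> (Q11inf *v x)))
             + (SUP z. dual_payoff M i Psi z + ereal ((1/2) * (z \<bullet> (Q22inf *v z))))"
proof
  \<comment> \<open>the hypotheses on i, Phi, M, Psi and the symmetry of the Q-blocks are only needed to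
    establish S_quad and W_repr, which are assumed here\<close>
  fix x :: "real^'n"
  obtain k0 where k0: "\<And>k z. k \<ge> k0 \<Longrightarrow> DP_op A B Phi gamma k (\<lambda>y. psi_basis M i y z) x
      = ereal (block_quad (Q11 k) (Q12 k) (Q21 k) (Q22 k) x z)"
    using S_quad by blast
  obtain r0 eps0 where "eps0 > 0" and dual_decay: "\<And>z. r0 < norm z \<Longrightarrow>
      dual_payoff M i Psi z \<le> ereal (- (1/2) * (z \<bullet> ((Q22inf + eps0 *\<^sub>R mat 1) *v z)))"
    using growth by blast
  define dual where "dual z = real_of_ereal (dual_payoff M i Psi z)" for z
  have dual_payoff_eq: "dual_payoff M i Psi z = ereal (dual z)" for z
    using dual_finite by (simp add: dual_def ereal_real')
  define g where "g z = block_quad Q11inf 0 0 Q22inf x z + dual z" for z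
  have g_far: "g z \<le> (1/2) * (x \<bullet> (Q11inf *v x)) - eps0/2 * (norm z)^2" if "r0 < norm z" for z
    using dual_decay[OF that, unfolded matrix_vector_mult_add_scaleR_mat_1]
    by (simp add: g_def block_quad_diag dual_payoff_eq power2_norm_eq_inner algebra_simps)
  have g_cont: "continuous_on UNIV g"
    using dual_cont unfolding g_def dual_def block_quad_diag by (intro continuous_intros) auto
  obtain Bg where g_decay: "\<And>z. g z \<le> Bg - eps0/2 * (norm z)^2"
    by (rule continuous_bounded_by_quadratic_decay[OF g_cont _ g_far]) (use \<open>eps0 > 0\<close> in auto)
  have "(\<lambda>k. SUP z. ereal (block_quad (Q11 k) (Q12 k) (Q21 k) (Q22 k) x z + dual z))
      \<longlonglongrightarrow> (SUP z. ereal (g z))"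
    unfolding g_def
    by (rule tendsto_SUP_block_quad_plus[OF lim11 lim12 lim21 lim22 _ g_decay[unfolded g_def]])
      (use \<open>eps0 > 0\<close> in simp)
  moreover have "eventually (\<lambda>k. value_fn A B Phi gamma Psi k x
      = (SUP z. ereal (block_quad (Q11 k) (Q12 k) (Q21 k) (Q22 k) x z + dual z))) sequentially"
    using eventually_ge_at_top[of k0] by eventually_elim (simp add: W_repr k0 dual_payoff_eq)
  moreover have "ereal ((1/2) * (x \<bullet> (Q11inf *v x)))
      + (SUP z. dual_payoff M i Psi z + ereal ((1/2) * (z \<bullet> (Q22inf *v z))))
      = (SUP z. ereal (g z))"
    by (subst SUP_ereal_add_right[symmetric])
      (simp_all add: g_def block_quad_diag dual_payoff_eq algebra_simps)
  ultimately show "(\<lambda>k. value_fn A B Phi gamma Psi k x) \<longlonglongrightarrow>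
      ereal ((1/2) * (x \<bullet> (Q11inf *v x)))
        + (SUP z. dual_payoff M i Psi z + ereal ((1/2) * (z \<bullet> (Q22inf *v z))))"
    by (simp add: tendsto_cong)
qed

end
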